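(* Let $G=(V,E)$ be a finite, undirected, unweighted, 2-vertex-connected graph with $n=|V|$ vertices. If $G$ contains a Hamiltonian path, then $G$ has a TSP tour of length at most $4n/3$.
   Context: A Hamiltonian path is a path in $G$ visiting every vertex exactly once. A TSP tour of $G$ is a closed walk in $G$ that visits every vertex at least once; its length is the number of edges traversed, counted with multiplicity. *)

theory Defs
  imports Main
begin

definition simple_graph :: "'a set \<Rightarrow> ('a \<Rightarrow> 'a \<Rightarrow> bool) \<Rightarrow> bool" where
  "simple_graph V E \<longleftrightarrow> finite V \<and> (\<forall>u v. E u v \<longrightarrow> u \<in> V \<and> v \<in> V)
     \<and> (\<forall>u v. E u v \<longrightarrow> E v u) \<and> (\<forall>v. \<not> E v v)"

definition is_walk :: "('a \<Rightarrow> 'a \<Rightarrow> bool) \<Rightarrow> 'a list \<Rightarrow> bool" where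
  "is_walk E w \<longleftrightarrow> w \<noteq> [] \<and> (\<forall>i. Suc i < length w \<longrightarrow> E (w ! i) (w ! Suc i))"

definition connected_on :: "('a \<Rightarrow> 'a \<Rightarrow> bool) \<Rightarrow> 'a set \<Rightarrow> bool" where
  "connected_on E S \<longleftrightarrow> (\<forall>u\<in>S. \<forall>v\<in>S. \<exists>w. is_walk E w \<and> set w \<subseteq> S \<and> hd w = u \<and> last w = v)"

definition two_connected :: "'a set \<Rightarrow> ('a \<Rightarrow> 'a \<Rightarrow> bool) \<Rightarrow> bool" where
  "two_connected V E \<longleftrightarrow> card V > 2 \<and> connected_on E V \<and> (\<forall>x\<in>V. connected_on E (V - {x}))"

definition hamiltonian_path :: "'a set \<Rightarrow> ('a \<Rightarrow> 'a \<Rightarrow> bool) \<Rightarrow> 'a list \<Rightarrow> bool" where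
  "hamiltonian_path V E p \<longleftrightarrow> is_walk E p \<and> distinct p \<and> set p = V"

definition tsp_tour :: "'a set \<Rightarrow> ('a \<Rightarrow> 'a \<Rightarrow> bool) \<Rightarrow> 'a list \<Rightarrow> bool" where
  "tsp_tour V E w \<longleftrightarrow> is_walk E w \<and> hd w = last w \<and> set w = V"

definition tour_length :: "'a list \<Rightarrow> nat" where
  "tour_length w = length w - 1"

end

theory Submission
  imports Defs
begin

text \<open>Number the vertices 0, ..., n - 1 along the Hamiltonian path. Since removing an inner
vertex i leaves 0 and n - 1 connected, some edge jumps over i. Sweep from left to right, always
jumping to the farthest vertex reachable by an edge from below the current frontier, and maintain
four walks from 0 whose total length grows by exactly 2 per step of progress of the frontier. When
the frontier reaches n - 1 they close up, together with the path itself, into three tours through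
all vertices of total length 4n - 2, so the shortest has length at most 4n/3.\<close>

definition walk_between :: "('a \<Rightarrow> 'a \<Rightarrow> bool) \<Rightarrow> 'a \<Rightarrow> 'a \<Rightarrow> 'a list \<Rightarrow> bool" where
  "walk_between R a b w \<longleftrightarrow> w \<noteq> [] \<and> successively R w \<and> hd w = a \<and> last w = b"

lemma walk_between_append_tl:
  assumes "walk_between R a b xs" and "walk_between R b c ys"
  shows "walk_between R a c (xs @ tl ys)"
proof -
  obtain ys' where "ys = b # ys'"
    using assms(2) unfolding walk_between_def by (cases ys) auto
  then show ?thesis
    using assms unfolding walk_between_def
    by (auto simp: successively_append_iff successively_Cons)
qed

lemma set_walk_append_tl:
  assumes "walk_between R a b xs" and "walk_between R b c ys"
  shows "set (xs @ tl ys) = set xs \<union> set ys"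
proof -
  have "ys = b # tl ys" using assms(2) unfolding walk_between_def by (metis list.collapse)
  then have "set ys = insert b (set (tl ys))" by (metis list.set(2))
  moreover have "b \<in> set xs" using assms(1) unfolding walk_between_def by (metis last_in_set)
  ultimately show ?thesis by auto
qed

lemma walk_between_snoc:
  "walk_between R a b xs \<Longrightarrow> R b c \<Longrightarrow> walk_between R a c (xs @ [c])"
  using walk_between_append_tl[of R a b xs c "[b, c]"] by (simp add: walk_between_def)

lemma walk_between_rev:
  assumes "symp R" and "walk_between R a b w"
  shows "walk_between R b a (rev w)"
  using assms unfolding walk_between_def
  by (auto simp: hd_rev last_rev elim: successively_mono dest: sympD)

lemma walk_leaves_set:
  "successively R w \<Longrightarrow> w \<noteq> [] \<Longrightarrow> hd w \<in> S \<Longrightarrow> last w \<notin> S \<Longrightarrow>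
   \<exists>u v. R u v \<and> u \<in> S \<and> v \<notin> S \<and> v \<in> set w"
proof (induction w)
  case (Cons x xs)
  show ?case
  proof (cases "hd xs \<in> S")
    case True
    with Cons have "xs \<noteq> []" by auto
    with True Cons show ?thesis by (auto simp: successively_Cons)
  next
    case False
    with Cons.prems show ?thesis by (cases xs) auto
  qed
qed simp

text \<open>A graph renumbered along its Hamiltonian path; 2-connectivity enters only through jump.\<close>
locale jumped_path =
  fixes R :: "nat \<Rightarrow> nat \<Rightarrow> bool" and n :: nat
  assumes sym: "R i j \<Longrightarrow> R j i"
    and bounded: "R i j \<Longrightarrow> j < n"
    and path: "Suc i < n \<Longrightarrow> R i (Suc i)"
    and jump: "0 < i \<Longrightarrow> Suc i < n \<Longrightarrow> \<exists>a b. a < i \<and> i < b \<and> R a b"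
begin

lemma symp: "symp R"
  by (auto intro: sympI sym)

lemma walk_between_upt: "i \<le> j \<Longrightarrow> j < n \<Longrightarrow> walk_between R i j [i..<Suc j]"
  by (auto simp: walk_between_def successively_conv_nth intro: path simp del: upt_Suc)

lemma walk_between_subset:
  assumes "walk_between R a b w"
  shows "set w \<subseteq> insert a {..<n}"
proof
  fix v assume "v \<in> set w"
  then obtain k where k: "k < length w" "v = w ! k" by (auto simp: in_set_conv_nth)
  show "v \<in> insert a {..<n}"
  proof (cases k)
    case 0
    with assms k show ?thesis by (auto simp: walk_between_def hd_conv_nth)
  next
    case (Suc i)
    with assms k have "R (w ! i) v" by (auto simp: walk_between_def successively_conv_nth)
    then show ?thesis by (auto dest: bounded)
  qed
qed

lemma farthest_jump:
  assumes "0 < y" and "Suc y < n"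
  obtains a b where "a < y" "y < b" "R a b" "\<And>a' b'. R a' b' \<Longrightarrow> a' < y \<Longrightarrow> b' \<le> b"
proof -
  define B where "B = {b. \<exists>a<y. R a b}"
  have "finite B" unfolding B_def by (auto intro: finite_subset[of _ "{..<n}"] dest: bounded)
  obtain a0 b0 where "a0 < y" "y < b0" "R a0 b0" using jump assms by blast
  then have "b0 \<in> B" unfolding B_def by blast
  then have "Max B \<in> B" and "b0 \<le> Max B" using \<open>finite B\<close> by (auto intro: Max_in)
  then obtain a where "a < y" "R a (Max B)" unfolding B_def by blast
  show ?thesis
  proof (rule that)
    show "b' \<le> Max B" if "R a' b'" "a' < y" for a' b'
      using that \<open>finite B\<close> unfolding B_def by (auto intro: Max_ge)
  qed (use \<open>a < y\<close> \<open>R a (Max B)\<close> \<open>y < b0\<close> \<open>b0 \<le> Max B\<close> in auto)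
qed

text \<open>x and y are the previous and the current frontier. The length budget 2x + 6 is what makes
the three tours closed up at the end have 4n + 1 vertex occurrences in total.\<close>
definition sweep_state :: "nat \<Rightarrow> nat \<Rightarrow> nat list \<Rightarrow> nat list \<Rightarrow> nat list \<Rightarrow> nat list \<Rightarrow> bool" where
  "sweep_state x y U W U2 W2 \<longleftrightarrow> x < y \<and>
     walk_between R 0 y U \<and> walk_between R 0 x W \<and> walk_between R 0 y U2 \<and> walk_between R 0 x W2 \<and>
     set U2 \<union> set W2 = {0..x} \<union> {y} \<and>
     length U + length W + length U2 + length W2 = 2 * x + 6 \<and>
     (\<forall>a b. R a b \<longrightarrow> a < x \<longrightarrow> b \<le> y)"

lemma sweep_state_init:
  assumes "3 \<le> n"
  shows "\<exists>y. sweep_state 0 y [0, y] [0] [0, y] [0]"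
proof -
  obtain a b where "a < 1" "1 < b" "R a b" using jump[of 1] assms by auto
  then show ?thesis by (auto simp: sweep_state_def walk_between_def intro!: exI[of _ b])
qed

lemma sweep_state_step:
  assumes st: "sweep_state x y U W U2 W2" and "Suc y < n"
  shows "\<exists>y' U' W' U2' W2'. y < y' \<and> sweep_state y y' U' W' U2' W2'"
proof -
  have "x < y" and U: "walk_between R 0 y U" and W: "walk_between R 0 x W"
    and U2: "walk_between R 0 y U2" and W2: "walk_between R 0 x W2"
    and cover: "set U2 \<union> set W2 = {0..x} \<union> {y}"
    and len: "length U + length W + length U2 + length W2 = 2 * x + 6"
    and below: "\<And>a b. R a b \<Longrightarrow> a < x \<Longrightarrow> b \<le> y"
    using st unfolding sweep_state_def by blast+
  then have "0 < y" by simp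
  then obtain a b where ab: "a < y" "y < b" "R a b"
    and farthest: "\<And>a' b'. R a' b' \<Longrightarrow> a' < y \<Longrightarrow> b' \<le> b"
    using farthest_jump \<open>Suc y < n\<close> by blast
  \<comment> \<open>edges starting below x stop at y, so the jump over y starts at x or later\<close>
  have "x \<le> a" using below ab by (metis not_le)
  have up: "walk_between R x a [x..<Suc a]" "walk_between R (Suc a) y [Suc a..<Suc y]"
    using \<open>x \<le> a\<close> ab \<open>Suc y < n\<close> by (simp_all add: walk_between_upt del: upt_Suc)
  have down: "walk_between R y (Suc a) (rev [Suc a..<Suc y])"
    using walk_between_rev[OF symp up(2)] .
  define Wa where "Wa = W @ tl [x..<Suc a]"
  define W2a where "W2a = W2 @ tl [x..<Suc a]"
  define L where "L = rev [Suc a..<Suc y] @ tl [Suc a..<Suc y]"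
  have Wa: "walk_between R 0 a Wa" "walk_between R 0 a W2a"
    unfolding Wa_def W2a_def
    by (rule walk_between_append_tl[OF W up(1)], rule walk_between_append_tl[OF W2 up(1)])
  have L: "walk_between R y y L"
    unfolding L_def using walk_between_append_tl[OF down up(2)] .
  have "set W2a = set W2 \<union> {x..a}" "set L = {Suc a..y}"
    unfolding W2a_def L_def set_walk_append_tl[OF W2 up(1)] set_walk_append_tl[OF down up(2)]
    by (simp_all add: atLeastLessThanSuc_atLeastAtMost del: upt_Suc)
  moreover have "{0..x} \<union> {y} \<union> {x..a} \<union> {Suc a..y} = {0..y}"
    using \<open>x \<le> a\<close> \<open>a < y\<close> by auto
  ultimately have "set (W2a @ [b]) \<union> set (U2 @ tl L) = {0..y} \<union> {b}"
    using cover set_walk_append_tl[OF U2 L] by auto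
  moreover have "length (Wa @ [b]) + length U + length (W2a @ [b]) + length (U2 @ tl L) = 2 * y + 6"
    using len \<open>x \<le> a\<close> \<open>a < y\<close> unfolding Wa_def W2a_def L_def by simp
  moreover have "walk_between R 0 b (Wa @ [b])" "walk_between R 0 b (W2a @ [b])"
    using Wa ab(3) by (simp_all add: walk_between_snoc)
  moreover have "walk_between R 0 y (U2 @ tl L)"
    using walk_between_append_tl[OF U2 L] .
  ultimately have "sweep_state y b (Wa @ [b]) U (W2a @ [b]) (U2 @ tl L)"
    unfolding sweep_state_def using ab(2) U farthest by blast
  then show ?thesis using ab by blast
qed

lemma sweep_state_frontier_less:
  assumes "sweep_state x y U W U2 W2"
  shows "y < n"
proof -
  have "walk_between R 0 y U" "y \<in> set U" "0 < y"
    using assms unfolding sweep_state_def walk_between_def by (auto intro: last_in_set)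
  then show ?thesis using walk_between_subset by fastforce
qed

lemma sweep_state_reaches_end:
  assumes "sweep_state x y U W U2 W2"
  shows "\<exists>x' U' W' U2' W2'. sweep_state x' (n - 1) U' W' U2' W2'"
  using assms
proof (induction "n - y" arbitrary: x y U W U2 W2 rule: less_induct)
  case less
  have "y < n" using less.prems by (rule sweep_state_frontier_less)
  show ?case
  proof (cases "Suc y = n")
    case True
    then have "y = n - 1" by simp
    then show ?thesis using less.prems by blast
  next
    case False
    with \<open>y < n\<close> have "Suc y < n" by simp
    then obtain y' U' W' U2' W2' where "y < y'" and st': "sweep_state y y' U' W' U2' W2'"
      using sweep_state_step[OF less.prems] by blast
    moreover have "y' < n" using st' by (rule sweep_state_frontier_less)
    ultimately show ?thesis by (intro less.hyps[OF _ st']) simp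
  qed
qed

lemma sweep_state_short_tour:
  assumes st: "sweep_state x (n - 1) U W U2 W2"
  shows "\<exists>T. walk_between R 0 0 T \<and> set T = {..<n} \<and> 3 * (length T - 1) \<le> 4 * n"
proof -
  have "x < n - 1" and U: "walk_between R 0 (n - 1) U" and W: "walk_between R 0 x W"
    and U2: "walk_between R 0 (n - 1) U2" and W2: "walk_between R 0 x W2"
    and cover: "set U2 \<union> set W2 = {0..x} \<union> {n - 1}"
    and len: "length U + length W + length U2 + length W2 = 2 * x + 6"
    using st unfolding sweep_state_def by blast+
  have P: "walk_between R 0 (n - 1) [0..<n]" "walk_between R x (n - 1) [x..<n]"
    using walk_between_upt[of 0 "n - 1"] walk_between_upt[of x "n - 1"] \<open>x < n - 1\<close> by auto
  have rU: "walk_between R (n - 1) 0 (rev U)"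
    using walk_between_rev[OF symp U] .
  have rW: "walk_between R (n - 1) 0 (rev (W @ tl [x..<n]))"
    using walk_between_rev[OF symp walk_between_append_tl[OF W P(2)]] .
  have rW2: "walk_between R (n - 1) 0 (rev (W2 @ tl [x..<n]))"
    using walk_between_rev[OF symp walk_between_append_tl[OF W2 P(2)]] .
  define T1 where "T1 = [0..<n] @ tl (rev U)"
  define T2 where "T2 = [0..<n] @ tl (rev (W @ tl [x..<n]))"
  define T3 where "T3 = U2 @ tl (rev (W2 @ tl [x..<n]))"
  have walks: "walk_between R 0 0 T1" "walk_between R 0 0 T2" "walk_between R 0 0 T3"
    unfolding T1_def T2_def T3_def
    by (rule walk_between_append_tl[OF P(1) rU], rule walk_between_append_tl[OF P(1) rW],
        rule walk_between_append_tl[OF U2 rW2])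
  have "set U \<subseteq> {..<n}" "set W \<subseteq> {..<n}"
    using walk_between_subset[OF U] walk_between_subset[OF W] \<open>x < n - 1\<close> by auto
  then have covers12: "set T1 = {..<n}" "set T2 = {..<n}"
    unfolding T1_def T2_def set_walk_append_tl[OF P(1) rU] set_walk_append_tl[OF P(1) rW]
    by auto
  have covers3: "set T3 = {..<n}"
  proof -
    have "set T3 = set U2 \<union> set W2 \<union> {Suc x..<n}"
      unfolding T3_def set_walk_append_tl[OF U2 rW2] by auto
    also have "\<dots> = {0..x} \<union> {n - 1} \<union> {Suc x..<n}" using cover by simp
    also have "\<dots> = {..<n}" using \<open>x < n - 1\<close> by auto
    finally show ?thesis .
  qed
  have "0 < length U" "0 < length W" "0 < length U2"
    using U W U2 by (simp_all add: walk_between_def)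
  then have "length T1 + 1 = n + length U" "length T2 + x + 2 = 2 * n + length W"
    "length T3 + x + 2 = length U2 + length W2 + n"
    unfolding T1_def T2_def T3_def using \<open>x < n - 1\<close> by (auto simp del: length_greater_0_conv)
  then have "length T1 + length T2 + length T3 = 4 * n + 1"
    using len by linarith
  then have "3 * (length T1 - 1) \<le> 4 * n \<or> 3 * (length T2 - 1) \<le> 4 * n \<or> 3 * (length T3 - 1) \<le> 4 * n"
    by linarith
  then show ?thesis using walks covers12 covers3 by blast
qed

lemma short_tour:
  assumes "3 \<le> n"
  shows "\<exists>T. walk_between R 0 0 T \<and> set T = {..<n} \<and> 3 * (length T - 1) \<le> 4 * n"
  using sweep_state_init[OF assms] sweep_state_reaches_end sweep_state_short_tour by blast

end

definition path_index_graph :: "('a \<Rightarrow> 'a \<Rightarrow> bool) \<Rightarrow> 'a list \<Rightarrow> nat \<Rightarrow> nat \<Rightarrow> bool" where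
  "path_index_graph E p i j \<longleftrightarrow> i < length p \<and> j < length p \<and> E (p ! i) (p ! j)"

lemma is_walk_iff_successively: "is_walk E w \<longleftrightarrow> w \<noteq> [] \<and> successively E w"
  by (simp add: is_walk_def successively_conv_nth)

lemma nth_in_set_take_iff:
  assumes "distinct p" and "j < length p"
  shows "p ! j \<in> set (take i p) \<longleftrightarrow> j < i"
proof
  assume "p ! j \<in> set (take i p)"
  then obtain k where "k < i" "k < length p" "p ! k = p ! j" by (auto simp: in_set_conv_nth)
  then show "j < i" using assms nth_eq_iff_index_eq by metis
next
  assume "j < i"
  then have "take i p ! j = p ! j" "j < length (take i p)" using assms(2) by auto
  then show "p ! j \<in> set (take i p)" by (metis nth_mem)
qed

lemma hamiltonian_path_jump:
  assumes "two_connected V E" and "hamiltonian_path V E p"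
    and "0 < i" and "Suc i < length p"
  shows "\<exists>a b. a < i \<and> i < b \<and> b < length p \<and> E (p ! a) (p ! b)"
proof -
  let ?n = "length p"
  have p: "is_walk E p" "distinct p" "set p = V"
    using assms(2) unfolding hamiltonian_path_def by auto
  have idx: "0 < ?n" "i < ?n" "?n - 1 < ?n" using assms(4) by auto
  have "p ! 0 \<noteq> p ! i" "p ! (?n - 1) \<noteq> p ! i"
    using nth_eq_iff_index_eq[OF p(2) idx(1,2)] nth_eq_iff_index_eq[OF p(2) idx(3,2)] assms(3,4)
    by auto
  then have "p ! 0 \<in> V - {p ! i}" "p ! (?n - 1) \<in> V - {p ! i}"
    using p(3) nth_mem[OF idx(1)] nth_mem[OF idx(3)] by auto
  moreover have "connected_on E (V - {p ! i})"
    using assms(1,4) p(3) unfolding two_connected_def by auto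
  ultimately obtain w where w: "is_walk E w" "set w \<subseteq> V - {p ! i}"
    "hd w = p ! 0" "last w = p ! (?n - 1)"
    unfolding connected_on_def by blast
  let ?S = "set (take i p)"
  have "hd w \<in> ?S" "last w \<notin> ?S"
    using w(3,4) nth_in_set_take_iff[OF p(2) idx(1)] nth_in_set_take_iff[OF p(2) idx(3)] assms(3,4)
    by auto
  moreover have "successively E w" "w \<noteq> []" using w(1) by (simp_all add: is_walk_iff_successively)
  ultimately obtain u v where uv: "E u v" "u \<in> ?S" "v \<notin> ?S" "v \<in> set w"
    using walk_leaves_set by metis
  obtain a where a: "a < ?n" "u = p ! a"
    using uv(2) set_take_subset by (metis in_set_conv_nth subsetD)
  obtain b where b: "b < ?n" "v = p ! b"
    using uv(4) w(2) p(3) by (metis Diff_subset in_set_conv_nth subsetD)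
  have "a < i" using uv(2) a nth_in_set_take_iff[OF p(2)] by blast
  moreover have "i < b"
    using uv(3,4) w(2) b nth_in_set_take_iff[OF p(2) b(1), of i] by (auto simp: nat_neq_iff)
  ultimately show ?thesis using a b uv(1) by blast
qed

lemma jumped_path_index_graph:
  assumes "simple_graph V E" "two_connected V E" "hamiltonian_path V E p"
  shows "jumped_path (path_index_graph E p) (length p)"
proof
  show "path_index_graph E p j i" if "path_index_graph E p i j" for i j
    using that assms(1) unfolding path_index_graph_def simple_graph_def by blast
  show "path_index_graph E p i (Suc i)" if "Suc i < length p" for i
    using that assms(3) unfolding path_index_graph_def hamiltonian_path_def is_walk_def by auto
  show "\<exists>a b. a < i \<and> i < b \<and> path_index_graph E p a b" if "0 < i" "Suc i < length p" for i
    using hamiltonian_path_jump[OF assms(2,3) that] unfolding path_index_graph_def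
    by (metis less_trans)
qed (simp add: path_index_graph_def)

lemma tsp_tour_map_nth:
  assumes "hamiltonian_path V E p"
    and "walk_between (path_index_graph E p) 0 0 T" and "set T = {..<length p}"
  shows "tsp_tour V E (map ((!) p) T)"
proof -
  have "set (map ((!) p) T) = set p"
    using assms(3) by (simp add: lessThan_atLeast0 nth_image)
  moreover have "successively E (map ((!) p) T)"
    using assms(2) unfolding walk_between_def successively_map
    by (auto elim: successively_mono simp: path_index_graph_def)
  ultimately show ?thesis
    using assms(1,2) unfolding tsp_tour_def walk_between_def is_walk_iff_successively hamiltonian_path_def
    by (simp add: hd_map last_map)
qed

theorem theorem2:
  fixes V :: "'a set" and E :: "'a \<Rightarrow> 'a \<Rightarrow> bool"
  assumes "simple_graph V E"
    and "two_connected V E"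
    and "\<exists>p. hamiltonian_path V E p"
  shows "\<exists>w. tsp_tour V E w \<and> 3 * tour_length w \<le> 4 * card V"
proof -
  obtain p where p: "hamiltonian_path V E p" using assms(3) by blast
  then have card: "card V = length p"
    unfolding hamiltonian_path_def by (metis distinct_card)
  interpret jumped_path "path_index_graph E p" "length p"
    using jumped_path_index_graph[OF assms(1,2) p] .
  have "3 \<le> length p" using assms(2) card unfolding two_connected_def by simp
  then obtain T where "walk_between (path_index_graph E p) 0 0 T" "set T = {..<length p}"
    "3 * (length T - 1) \<le> 4 * length p"
    using short_tour by blast
  then show ?thesis
    using tsp_tour_map_nth[OF p] card unfolding tour_length_def by (intro exI[of _ "map ((!) p) T"]) auto
qed

end
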